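(* The rational group $\mathcal{R}$ is flexible: for every pair $E_1,E_2$ of proper nonempty clopen subsets of $\{0,1\}^\omega$ there exists $g\in\mathcal{R}$ with $g(E_1)\subseteq E_2$.
   Context: An asynchronous binary transducer is $(S,s_0,t,o)$ with $S$ finite, $s_0\in S$, $t\colon S\times\{0,1\}\to S$, $o\colon S\times\{0,1\}\to\{0,1\}^*$. For a state $s$ and sequence $\sigma_1\sigma_2\cdots$ let $s_1=s$, $s_{n+1}=t(s_n,\sigma_n)$, and $o(s,\sigma_1\sigma_2\cdots)=o(s_1,\sigma_1)o(s_2,\sigma_2)\cdots$. A homeomorphism $f$ of $\{0,1\}^\omega$ is rational if some transducer satisfies $f(\psi)=o(s_0,\psi)$ for all $\psi$; $\mathcal{R}$ is the group of rational homeomorphisms. *)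

theory Defs
  imports "HOL-Analysis.Analysis"
begin

definition cantor_top :: "(nat \<Rightarrow> bool) topology" where
  "cantor_top = product_topology (\<lambda>_. discrete_topology (UNIV :: bool set)) UNIV"

definition cantor_clopen :: "(nat \<Rightarrow> bool) set \<Rightarrow> bool" where
  "cantor_clopen E \<longleftrightarrow> openin cantor_top E \<and> closedin cantor_top E"

fun trans_run :: "(nat \<Rightarrow> bool \<Rightarrow> nat) \<Rightarrow> nat \<Rightarrow> (nat \<Rightarrow> bool) \<Rightarrow> nat \<Rightarrow> nat" where
  "trans_run t s \<psi> 0 = s"
| "trans_run t s \<psi> (Suc n) = t (trans_run t s \<psi> n) (\<psi> n)"

definition trans_out_prefix ::
  "(nat \<Rightarrow> bool \<Rightarrow> nat) \<Rightarrow> (nat \<Rightarrow> bool \<Rightarrow> bool list) \<Rightarrow> nat \<Rightarrow> (nat \<Rightarrow> bool) \<Rightarrow> nat \<Rightarrow> bool list" where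
  "trans_out_prefix t out s \<psi> n = concat (map (\<lambda>i. out (trans_run t s \<psi> i) (\<psi> i)) [0..<n])"

text \<open>\<open>o(s,\<psi>) = \<phi>\<close>: the infinite concatenation of outputs is the infinite word \<phi>
  (in particular it is infinite).\<close>
definition trans_output_is ::
  "(nat \<Rightarrow> bool \<Rightarrow> nat) \<Rightarrow> (nat \<Rightarrow> bool \<Rightarrow> bool list) \<Rightarrow> nat \<Rightarrow> (nat \<Rightarrow> bool) \<Rightarrow> (nat \<Rightarrow> bool) \<Rightarrow> bool" where
  "trans_output_is t out s \<psi> \<phi> \<longleftrightarrow>
     (\<forall>m. \<exists>n. m < length (trans_out_prefix t out s \<psi> n)) \<and>
     (\<forall>n k. k < length (trans_out_prefix t out s \<psi> n) \<longrightarrow> \<phi> k = trans_out_prefix t out s \<psi> n ! k)"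

definition is_transducer :: "nat set \<Rightarrow> nat \<Rightarrow> (nat \<Rightarrow> bool \<Rightarrow> nat) \<Rightarrow> bool" where
  "is_transducer S s0 t \<longleftrightarrow> finite S \<and> s0 \<in> S \<and> (\<forall>s\<in>S. \<forall>b. t s b \<in> S)"

definition rational_homeo :: "((nat \<Rightarrow> bool) \<Rightarrow> (nat \<Rightarrow> bool)) \<Rightarrow> bool" where
  "rational_homeo f \<longleftrightarrow> homeomorphic_map cantor_top cantor_top f \<and>
     (\<exists>S s0 t out. is_transducer S s0 t \<and> (\<forall>\<psi>. trans_output_is t out s0 \<psi> (f \<psi>)))"

end

theory Submission
  imports Defs "HOL-Library.Omega_Words_Fun"
begin

(* The complement of E1 contains a cylinder uC and E2 contains a cylinder wC. The map
   sending x to wx when x does not start with u, uy to y when y does not start with w,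
   and uwz to wuz is an involution that sends E1 into wC. It only rewrites a prefix of
   bounded length N, i.e. it has the form x \<mapsto> g(x_0..x_{N-1}) x_N x_{N+1}..., and every
   such block map is continuous and computed by a transducer buffering the first N symbols. *)

lemma topspace_cantor_top [simp]: "topspace cantor_top = UNIV"
  by (simp add: cantor_top_def)

lemma openin_cantor_top_cylinder: "openin cantor_top {y. \<forall>j<M. y j = x j}"
proof -
  have "{y. \<forall>j<M. y j = x j} = (\<Pi>\<^sub>E j\<in>UNIV. if j < M then {x j} else UNIV)"
    by (auto simp: PiE_def Pi_def)
  moreover have "openin cantor_top (\<Pi>\<^sub>E j\<in>UNIV. if j < M then {x j} else UNIV)"
    unfolding cantor_top_def
    by (rule product_topology_basis) (auto intro: finite_subset[of _ "{..<M}"])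
  ultimately show ?thesis
    by simp
qed

lemma openin_cantor_top_contains_cylinder:
  assumes "openin cantor_top E" "x \<in> E"
  obtains w where "\<And>y. w \<frown> y \<in> E"
proof -
  obtain X where X: "x \<in> Pi\<^sub>E UNIV X" "finite {i. X i \<noteq> UNIV}" "Pi\<^sub>E UNIV X \<subseteq> E"
    using product_topology_open_contains_basis[OF assms[unfolded cantor_top_def]]
    by (metis topspace_discrete_topology)
  obtain M where M: "\<And>i. X i \<noteq> UNIV \<Longrightarrow> i < M"
    using X(2) unfolding finite_nat_set_iff_bounded by auto
  have "prefix M x \<frown> y \<in> Pi\<^sub>E UNIV X" for y
  proof -
    have "(prefix M x \<frown> y) i \<in> X i" for i
    proof (cases "i < M")
      case True
      then have "(prefix M x \<frown> y) i = x i"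
        by (simp add: conc_def subsequence_def)
      then show ?thesis
        using PiE_mem[OF X(1)] by simp
    next
      case False
      then show ?thesis
        using M by blast
    qed
    then show ?thesis
      by (simp add: PiE_iff)
  qed
  then show ?thesis
    using that X(3) by blast
qed

lemma continuous_map_cantor_top_if_finite_dependence:
  assumes "\<And>k. \<exists>M. \<forall>x y. (\<forall>j<M. x j = y j) \<longrightarrow> f x k = f y k"
  shows "continuous_map cantor_top cantor_top f"
  unfolding cantor_top_def continuous_map_componentwise_UNIV
proof
  fix k
  obtain M where M: "\<forall>x y. (\<forall>j<M. x j = y j) \<longrightarrow> f x k = f y k"
    using assms by blast
  have "openin cantor_top {x. f x k \<in> U}" for U
  proof (subst openin_subopen, intro ballI)
    fix x
    assume x: "x \<in> {x. f x k \<in> U}"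
    have "{y. \<forall>j<M. y j = x j} \<subseteq> {x. f x k \<in> U}"
    proof
      fix y
      assume "y \<in> {y. \<forall>j<M. y j = x j}"
      then have "f y k = f x k"
        using M by simp
      then show "y \<in> {x. f x k \<in> U}"
        using x by simp
    qed
    then show "\<exists>T. openin cantor_top T \<and> x \<in> T \<and> T \<subseteq> {x. f x k \<in> U}"
      using openin_cantor_top_cylinder[of M x] by blast
  qed
  then show "continuous_map (product_topology (\<lambda>_. discrete_topology UNIV) UNIV)
      (discrete_topology UNIV) (\<lambda>x. f x k)"
    by (simp add: continuous_map_def cantor_top_def)
qed

definition block_map :: "nat \<Rightarrow> ('a list \<Rightarrow> 'a list) \<Rightarrow> 'a word \<Rightarrow> 'a word" where
  "block_map N g x = g (prefix N x) \<frown> suffix N x"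

lemma block_map_finite_dependence:
  assumes "\<forall>j\<le>N + k. x j = y j"
  shows "block_map N g x k = block_map N g y k"
proof -
  have "prefix N x = prefix N y"
    using assms by (auto simp: subsequence_def)
  then show ?thesis
    using assms by (simp add: block_map_def conc_def)
qed

lemma continuous_map_block_map: "continuous_map cantor_top cantor_top (block_map N g)"
proof (rule continuous_map_cantor_top_if_finite_dependence)
  fix k
  show "\<exists>M. \<forall>x y. (\<forall>j<M. x j = y j) \<longrightarrow> block_map N g x k = block_map N g y k"
    by (intro exI[of _ "Suc (N + k)"] allI impI block_map_finite_dependence) (simp add: less_Suc_eq_le)
qed

(* A state is the code of the word buffered so far; after N symbols it stays fixed. *)
definition block_trans :: "nat \<Rightarrow> nat \<Rightarrow> bool \<Rightarrow> nat" where
  "block_trans N s c =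
     (let l = from_nat s :: bool list in if length l < N then to_nat (l @ [c]) else s)"

definition block_out :: "nat \<Rightarrow> (bool list \<Rightarrow> bool list) \<Rightarrow> nat \<Rightarrow> bool \<Rightarrow> bool list" where
  "block_out N g s c =
     (let l = from_nat s :: bool list in
      if length l < N then (if Suc (length l) = N then g (l @ [c]) else []) else [c])"

lemma trans_run_block_trans:
  "trans_run (block_trans N) (to_nat ([] :: bool list)) \<psi> n = to_nat (prefix (min n N) \<psi>)"
  by (induction n) (auto simp: block_trans_def min_def)

(* For N = 0 the transducer would never emit g []. *)
lemma trans_out_prefix_block_out:
  assumes "0 < N"
  shows "trans_out_prefix (block_trans N) (block_out N g) (to_nat ([] :: bool list)) \<psi> n =
    (if n < N then [] else g (prefix N \<psi>) @ \<psi>[N \<rightarrow> n])"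
proof (induction n)
  case 0
  then show ?case
    using assms by (simp add: trans_out_prefix_def)
next
  case (Suc n)
  have step: "trans_out_prefix (block_trans N) (block_out N g) (to_nat ([] :: bool list)) \<psi> (Suc n) =
      trans_out_prefix (block_trans N) (block_out N g) (to_nat ([] :: bool list)) \<psi> n @
      block_out N g (to_nat (prefix (min n N) \<psi>)) (\<psi> n)"
    by (simp add: trans_out_prefix_def trans_run_block_trans)
  consider "Suc n < N" | "Suc n = N" | "N \<le> n"
    by linarith
  then show ?case
  proof cases
    case 1
    then have "block_out N g (to_nat (prefix (min n N) \<psi>)) (\<psi> n) = []"
      by (simp add: block_out_def)
    then show ?thesis
      using 1 Suc.IH step by simp
  next
    case 2
    then have "block_out N g (to_nat (prefix (min n N) \<psi>)) (\<psi> n) = g (prefix N \<psi>)"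
      by (auto simp: block_out_def)
    then show ?thesis
      using 2 Suc.IH step by simp
  next
    case 3
    then have "block_out N g (to_nat (prefix (min n N) \<psi>)) (\<psi> n) = [\<psi> n]"
      by (simp add: block_out_def)
    then show ?thesis
      using 3 Suc.IH step by simp
  qed
qed

lemma is_transducer_block_trans:
  "is_transducer (to_nat ` {l :: bool list. length l \<le> N}) (to_nat ([] :: bool list)) (block_trans N)"
proof -
  have "finite {l :: bool list. length l \<le> N}"
    using finite_lists_length_le[of "UNIV :: bool set" N] by simp
  then show ?thesis
    by (auto simp: is_transducer_def block_trans_def)
qed

lemma trans_output_is_block_map:
  assumes "0 < N"
  shows "trans_output_is (block_trans N) (block_out N g) (to_nat ([] :: bool list)) \<psi> (block_map N g \<psi>)"
  unfolding trans_output_is_def trans_out_prefix_block_out[OF assms]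
proof (intro conjI allI impI)
  fix m
  show "\<exists>n. m < length (if n < N then [] else g (prefix N \<psi>) @ \<psi>[N \<rightarrow> n])"
    by (intro exI[of _ "N + Suc m"]) simp
next
  fix n k
  assume k: "k < length (if n < N then [] else g (prefix N \<psi>) @ \<psi>[N \<rightarrow> n])"
  then have "\<not> n < N"
    by auto
  with k show "block_map N g \<psi> k = (if n < N then [] else g (prefix N \<psi>) @ \<psi>[N \<rightarrow> n]) ! k"
    by (auto simp: block_map_def nth_append)
qed

lemma rational_homeo_block_map:
  assumes "0 < N" "homeomorphic_map cantor_top cantor_top (block_map N g)"
  shows "rational_homeo (block_map N g)"
  using assms is_transducer_block_trans trans_output_is_block_map
  unfolding rational_homeo_def by blast

definition swap_prefix :: "'a list \<Rightarrow> 'a list \<Rightarrow> 'a word \<Rightarrow> 'a word" where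
  "swap_prefix a b x =
     (if prefix (length a) x \<noteq> a then b \<frown> x
      else if prefix (length b) (suffix (length a) x) \<noteq> b then suffix (length a) x
      else (b @ a) \<frown> suffix (length a + length b) x)"

definition swap_word :: "'a list \<Rightarrow> 'a list \<Rightarrow> 'a list \<Rightarrow> 'a list" where
  "swap_word a b l =
     (if take (length a) l \<noteq> a then b @ l
      else if take (length b) (drop (length a) l) \<noteq> b then drop (length a) l
      else b @ a @ drop (length a + length b) l)"

lemma conc_prefix_suffix: "prefix (length w) x = w \<Longrightarrow> w \<frown> suffix (length w) x = x"
  by (metis prefix_suffix)

lemma swap_prefix_swap_prefix: "swap_prefix b a (swap_prefix a b x) = x"
proof (cases "prefix (length a) x = a")
  case False
  then show ?thesis
    by (simp add: swap_prefix_def)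
next
  case pa: True
  let ?y = "suffix (length a) x"
  have x: "x = a \<frown> ?y"
    using conc_prefix_suffix[OF pa] by simp
  show ?thesis
  proof (cases "prefix (length b) ?y = b")
    case False
    then show ?thesis
      using pa x by (simp add: swap_prefix_def)
  next
    case pb: True
    let ?z = "suffix (length a + length b) x"
    have "?y = b \<frown> ?z"
      using conc_prefix_suffix[OF pb] by simp
    then have "x = (a @ b) \<frown> ?z"
      using x by (metis conc_conc)
    then show ?thesis
      using pa pb by (simp add: swap_prefix_def)
  qed
qed

lemma swap_prefix_eq_block_map:
  assumes "length a + length b \<le> N"
  shows "swap_prefix a b = block_map N (swap_word a b)"
proof
  fix x :: "'a word"
  have take_a: "take (length a) (prefix N x) = prefix (length a) x"
    using assms by (simp add: min_def)
  have take_b: "take (length b) (drop (length a) (prefix N x)) = prefix (length b) (suffix (length a) x)"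
    using assms by (simp add: min_def)
  have drop_a: "drop (length a) (prefix N x) \<frown> suffix N x = suffix (length a) x"
    using assms by simp
  have drop_ab: "drop (length a + length b) (prefix N x) \<frown> suffix N x = suffix (length a + length b) x"
    using assms by simp
  show "swap_prefix a b x = block_map N (swap_word a b) x"
    unfolding swap_prefix_def block_map_def swap_word_def take_a take_b
    using drop_a drop_ab
    by (simp del: conc_conc add: conc_conc[symmetric] prefix_suffix[symmetric])
qed

lemma homeomorphic_map_swap_prefix: "homeomorphic_map cantor_top cantor_top (swap_prefix a b)"
proof (rule homeomorphic_maps_imp_map)
  have "continuous_map cantor_top cantor_top (swap_prefix a b)" for a b :: "bool list"
    using continuous_map_block_map swap_prefix_eq_block_map[OF order_refl] by metis
  then show "homeomorphic_maps cantor_top cantor_top (swap_prefix a b) (swap_prefix b a)"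
    by (simp add: homeomorphic_maps_def swap_prefix_swap_prefix)
qed

lemma rational_homeo_swap_prefix: "rational_homeo (swap_prefix a b)"
proof -
  have "swap_prefix a b = block_map (Suc (length a + length b)) (swap_word a b)"
    by (simp add: swap_prefix_eq_block_map)
  then show ?thesis
    using rational_homeo_block_map homeomorphic_map_swap_prefix by (metis zero_less_Suc)
qed

theorem proposition2p5:
  fixes E1 E2 :: "(nat \<Rightarrow> bool) set"
  assumes "cantor_clopen E1" "E1 \<noteq> {}" "E1 \<noteq> UNIV"
      and "cantor_clopen E2" "E2 \<noteq> {}" "E2 \<noteq> UNIV"
  shows "\<exists>g. rational_homeo g \<and> g ` E1 \<subseteq> E2"
proof -
  have "openin cantor_top (UNIV - E1)" "UNIV - E1 \<noteq> {}"
    using assms(1,3) by (auto simp: cantor_clopen_def closedin_def)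
  then obtain u where u: "\<And>y. u \<frown> y \<notin> E1"
    using openin_cantor_top_contains_cylinder by (metis Diff_iff ex_in_conv)
  obtain w where w: "\<And>y. w \<frown> y \<in> E2"
    using assms(4,5) openin_cantor_top_contains_cylinder
    unfolding cantor_clopen_def by blast
  have "swap_prefix u w x \<in> E2" if "x \<in> E1" for x
  proof -
    have "prefix (length u) x \<noteq> u"
      using u conc_prefix_suffix that by metis
    then show ?thesis
      using w by (simp add: swap_prefix_def)
  qed
  then show ?thesis
    using rational_homeo_swap_prefix by blast
qed

end
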